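(* (Parity.) There exists an $n$-RASP-L program with $T(n)=n$ that solves the $n$-bit parity task: for every $n\ge 1$, every $n'\ge 0$ and every binary sequence $x_1,\dots,x_n\in\{0,1\}$, the program maps the input sequence $$x_1\,\dots\,x_n\;\texttt{>}\;\underbrace{\texttt{\#}\,\dots\,\texttt{\#}}_{n'}$$ (of length $n+1+n'$) to an output sequence of the same length of the form $$\underbrace{*\,\dots\,*}_{n}\; y\;\underbrace{\texttt{\#}\,\dots\,\texttt{\#}}_{n'},$$ where $y=x_1\oplus x_2\oplus\cdots\oplus x_n$ is the parity of the input bits.
   Context: Tokens: $\texttt{>}$ is a special end-of-query (EOQ) token, $\texttt{\#}$ is a special end-of-sequence (EOS) token, and $*$ in the output denotes a position whose value is ignored (any value is allowed there). RASP-L is a restricted programming language modelling decoder-only (causal) Transformers. A RASP-L program takes an integer-token sequence of arbitrary length and returns a sequence of the same length. It is straight-line code (no branching, no loops), each line being a call to a core primitive or to another RASP-L program. Core primitives: $\mathrm{indices}(x)$ (the sequence $0,1,\dots,|x|-1$); $\mathrm{full}(x,c)$ (constant sequence); elementwise maps applying a fixed function to the tokens at each position of one or more sequences; and the causal attention operation $\mathrm{kqv}(k,q,v,\mathrm{pred},\mathrm{default})$, whose output at position $i$ is the (integer-truncated) mean of $v_j$ over all $j\le i$ with $\mathrm{pred}(k_j,q_i)$ true, or $\mathrm{default}$ if no such $j$ exists. Operations on token indices are restricted to order comparisons and successor/predecessor (e.g. $\mathrm{indices}(x)+1$); arbitrary index arithmetic is not allowed. For example, shifting a sequence right by one position is $\mathrm{kqv}(\mathrm{indices}(x)+1,\mathrm{indices}(x),x,=,0)$.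 An $n$-RASP-L program is a program $P$ for which there exist a function $T:\mathbb{N}\to\mathbb{N}$ and a RASP-L program $P'$ such that, on inputs of problem size $n$, $P$ consists of the sequential application of $P'$ for $T(n)$ steps (the paper allows fixed RASP-L pre-processing and post-processing steps, e.g. handling EOS/EOQ tokens, outside this loop). *)

theory Defs
  imports Main
begin

text \<open>Tokens are integers. The special tokens: EOQ ('>') and EOS ('#').
  They are distinct from the bit tokens 0 and 1.\<close>

definition EOQ :: int where "EOQ = 2"
definition EOS :: int where "EOS = 3"

text \<open>Index-valued sequences may only be compared (order comparisons) or shifted by +1/-1;
  arbitrary elementwise maps are only allowed on token-valued sequences.\<close>

datatype kind = Tk | Ix

datatype cmp = CEq | CNe | CLt | CLe | CGt | CGe

fun cmp_sem :: "cmp \<Rightarrow> int \<Rightarrow> int \<Rightarrow> bool" where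
  "cmp_sem CEq a b = (a = b)"
| "cmp_sem CNe a b = (a \<noteq> b)"
| "cmp_sem CLt a b = (a < b)"
| "cmp_sem CLe a b = (a \<le> b)"
| "cmp_sem CGt a b = (a > b)"
| "cmp_sem CGe a b = (a \<ge> b)"

text \<open>Variables are referred to by number:
  variable 0 is the input sequence, variable m+1 is the result of the m-th instruction.
  \<^item> Indices a: the sequence 0,1,...,|x_a|-1
  \<^item> Full a c: constant sequence of length |x_a|
  \<^item> Map f as: elementwise map of a fixed function over token sequences
  \<^item> Succ a / Pred a: indices +1 / -1
  \<^item> CmpIdx c a b: elementwise order comparison of two index sequences (result 0/1)
  \<^item> KQV k q v pred d: causal attention with token keys/queries and arbitrary predicate
  \<^item> KQVIdx c k q v d: causal attention with index keys/queries and an order comparison\<close>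

datatype instr =
    Indices nat
  | Full nat int
  | Map "int list \<Rightarrow> int" "nat list"
  | Succ nat
  | Pred nat
  | CmpIdx cmp nat nat
  | KQV nat nat nat "int \<Rightarrow> int \<Rightarrow> bool" int
  | KQVIdx cmp nat nat nat int

type_synonym rasp_prog = "instr list"

text \<open>Integer-truncated (towards zero) division used for the mean.\<close>
definition tdiv :: "int \<Rightarrow> int \<Rightarrow> int" where
  "tdiv s c = sgn s * (\<bar>s\<bar> div c)"

definition attn :: "(nat \<Rightarrow> bool) \<Rightarrow> int list \<Rightarrow> nat \<Rightarrow> int \<Rightarrow> int" where
  "attn sel vs i d =
     (let J = filter sel [0..<Suc i] in
      if J = [] then d else tdiv (sum_list (map (\<lambda>j. vs ! j) J)) (int (length J)))"

fun ieval :: "int list list \<Rightarrow> instr \<Rightarrow> int list" where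
  "ieval env (Indices a) = map int [0..<length (env ! a)]"
| "ieval env (Full a c) = replicate (length (env ! a)) c"
| "ieval env (Map f as) = map (\<lambda>i. f (map (\<lambda>a. env ! a ! i) as)) [0..<length (env ! 0)]"
| "ieval env (Succ a) = map (\<lambda>x. x + 1) (env ! a)"
| "ieval env (Pred a) = map (\<lambda>x. x - 1) (env ! a)"
| "ieval env (CmpIdx c a b) =
     map (\<lambda>i. if cmp_sem c (env ! a ! i) (env ! b ! i) then 1 else 0) [0..<length (env ! 0)]"
| "ieval env (KQV k q v p d) =
     map (\<lambda>i. attn (\<lambda>j. p (env ! k ! j) (env ! q ! i)) (env ! v) i d) [0..<length (env ! 0)]"
| "ieval env (KQVIdx c k q v d) =
     map (\<lambda>i. attn (\<lambda>j. cmp_sem c (env ! k ! j) (env ! q ! i)) (env ! v) i d) [0..<length (env ! 0)]"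

definition run :: "rasp_prog \<Rightarrow> int list \<Rightarrow> int list" where
  "run p xs = last (fold (\<lambda>ins env. env @ [ieval env ins]) p [xs])"

fun ikind :: "instr \<Rightarrow> kind" where
  "ikind (Indices _) = Ix"
| "ikind (Succ _) = Ix"
| "ikind (Pred _) = Ix"
| "ikind _ = Tk"

fun ins_ok :: "kind list \<Rightarrow> instr \<Rightarrow> bool" where
  "ins_ok ks (Indices a) = (a < length ks)"
| "ins_ok ks (Full a c) = (a < length ks)"
| "ins_ok ks (Map f as) = (\<forall>a\<in>set as. a < length ks \<and> ks ! a = Tk)"
| "ins_ok ks (Succ a) = (a < length ks \<and> ks ! a = Ix)"
| "ins_ok ks (Pred a) = (a < length ks \<and> ks ! a = Ix)"
| "ins_ok ks (CmpIdx c a b) = (a < length ks \<and> ks ! a = Ix \<and> b < length ks \<and> ks ! b = Ix)"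
| "ins_ok ks (KQV k q v p d) =
     (k < length ks \<and> ks ! k = Tk \<and> q < length ks \<and> ks ! q = Tk \<and> v < length ks \<and> ks ! v = Tk)"
| "ins_ok ks (KQVIdx c k q v d) =
     (k < length ks \<and> ks ! k = Ix \<and> q < length ks \<and> ks ! q = Ix \<and> v < length ks \<and> ks ! v = Tk)"

fun ok_from :: "kind list \<Rightarrow> rasp_prog \<Rightarrow> bool" where
  "ok_from ks [] = (last ks = Tk)"
| "ok_from ks (i # is) = (ins_ok ks i \<and> ok_from (ks @ [ikind i]) is)"

definition rasp_l :: "rasp_prog \<Rightarrow> bool" where
  "rasp_l p = ok_from [Tk] p"

definition n_rasp_run ::
  "rasp_prog \<Rightarrow> rasp_prog \<Rightarrow> rasp_prog \<Rightarrow> (nat \<Rightarrow> nat) \<Rightarrow> nat \<Rightarrow> int list \<Rightarrow> int list" where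
  "n_rasp_run pre step post T n xs = run post ((run step ^^ T n) (run pre xs))"

end

theory Submission
  imports Defs
begin

text \<open>Call cell i settled once it holds the parity of the first i + 1 bits. In one step every
  cell reads its left neighbour (attention with key index + 1 and query index; cell 0 reads a
  virtual settled cell of parity 0): a bit next to a settled cell settles, the EOQ cell next to a
  settled cell turns into the answer, and every other cell is unchanged. Thus each step settles
  exactly one more cell, the EOQ cell holds the parity of all n bits after n + 1 steps, and an
  elementwise map decodes it.\<close>

fun map_prev :: "(int \<Rightarrow> int \<Rightarrow> int) \<Rightarrow> int \<Rightarrow> int list \<Rightarrow> int list" where
  "map_prev f p [] = []"
| "map_prev f p (c # cs) = f c p # map_prev f c cs"

lemma length_map_prev [simp]: "length (map_prev f p s) = length s"
  by (induction s arbitrary: p) auto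

lemma map_prev_conv_nth: "map_prev f p s = map (\<lambda>i. f (s ! i) ((p # s) ! i)) [0..<length s]"
  by (induction s arbitrary: p) (auto simp: map_upt_Suc simp del: upt_Suc)

lemma map_prev_append:
  "map_prev f p (u @ v) = map_prev f p u @ map_prev f (last (p # u)) v"
  by (induction u arbitrary: p) auto

lemma map_prev_ident:
  assumes "\<And>c q. c \<in> set s \<Longrightarrow> q \<in> insert p (set s) \<Longrightarrow> f c q = c"
  shows "map_prev f p s = s"
  using assms by (induction s arbitrary: p) auto

lemma attn_cong:
  assumes "\<And>j. j \<le> i \<Longrightarrow> sel j = sel' j"
  shows "attn sel vs i d = attn sel' vs i d"
proof -
  have "filter sel [0..<Suc i] = filter sel' [0..<Suc i]"
    by (rule filter_cong) (auto simp: assms)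
  then show ?thesis
    by (simp only: attn_def)
qed

lemma attn_prev: "attn (\<lambda>j. int j + 1 = int i) vs i d = (if i = 0 then d else vs ! (i - 1))"
proof -
  have "filter (\<lambda>j. int j + 1 = int i) [0..<Suc i] = filter (\<lambda>j. Suc j = i) [0..<Suc i]"
    by (rule filter_cong) auto
  also have "\<dots> = (if i = 0 then [] else [i - 1])"
    by (cases i) (auto simp: filter_eq_Cons_iff)
  finally show ?thesis
    by (simp add: attn_def tdiv_def sgn_mult_abs)
qed

definition prev_rule_prog :: "(int \<Rightarrow> int \<Rightarrow> int) \<Rightarrow> int \<Rightarrow> rasp_prog" where
  "prev_rule_prog f d = [Indices 0, Succ 1, KQVIdx CEq 2 1 0 d, Map (\<lambda>l. f (l ! 0) (l ! 1)) [0, 3]]"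

lemma rasp_l_prev_rule_prog: "rasp_l (prev_rule_prog f d)"
  by (simp add: rasp_l_def prev_rule_prog_def)

lemma run_prev_rule_prog: "run (prev_rule_prog f d) s = map_prev f d s"
proof -
  have "attn (\<lambda>j. cmp_sem CEq (map (\<lambda>x. x + 1) (map int [0..<length s]) ! j) (int i)) s i d
      = (if i = 0 then d else s ! (i - 1))" if "i < length s" for i
    using that by (subst attn_prev[symmetric]) (rule attn_cong, simp)
  then show ?thesis
    by (simp add: run_def prev_rule_prog_def map_prev_conv_nth nth_Cons' del: cmp_sem.simps)
qed

definition map_prog :: "(int \<Rightarrow> int) \<Rightarrow> rasp_prog" where
  "map_prog g = [Map (\<lambda>l. g (l ! 0)) [0]]"

lemma rasp_l_map_prog: "rasp_l (map_prog g)"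
  by (simp add: rasp_l_def map_prog_def)

lemma run_map_prog: "run (map_prog g) s = map g s"
  by (simp add: run_def map_prog_def map_equality_iff)

text \<open>Working tokens, disjoint from the input alphabet {0, 1, EOQ, EOS} = {0, 1, 2, 3}.\<close>

definition settled_tok :: "int \<Rightarrow> int" where
  "settled_tok b = 4 + b"

definition answer_tok :: "int \<Rightarrow> int" where
  "answer_tok b = 6 + b"

definition parity :: "int list \<Rightarrow> int" where
  "parity xs = sum_list xs mod 2"

text \<open>As settled_tok 0 is even, p mod 2 is the parity stored in a settled cell p.\<close>

definition parity_rule :: "int \<Rightarrow> int \<Rightarrow> int" where
  "parity_rule c p =
     (if p \<in> {settled_tok 0, settled_tok 1} then
        if c \<in> {0, 1} then settled_tok ((p + c) mod 2)
        else if c = EOQ then answer_tok (p mod 2) else c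
      else c)"

definition decode :: "int \<Rightarrow> int" where
  "decode t = (if t \<ge> answer_tok 0 then t - answer_tok 0 else t)"

abbreviation parity_step :: "int list \<Rightarrow> int list" where
  "parity_step \<equiv> map_prev parity_rule (settled_tok 0)"

definition settled_prefix :: "int list \<Rightarrow> int list" where
  "settled_prefix ys = map (\<lambda>k. settled_tok (parity (take (Suc k) ys))) [0..<length ys]"

definition parity_config :: "int list \<Rightarrow> int list \<Rightarrow> nat \<Rightarrow> int list" where
  "parity_config ys zs n' = settled_prefix ys @ zs @ EOQ # replicate n' EOS"

lemma parity_snoc: "parity (ys @ [c]) = (parity ys + c) mod 2"
  by (simp add: parity_def mod_add_left_eq)

lemma parity_cases: "parity ys = 0 \<or> parity ys = 1"
  unfolding parity_def by linarith

lemma parity_rule_bit: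
  assumes "c \<in> {0, 1}"
  shows "parity_rule c (settled_tok (parity ys)) = settled_tok (parity (ys @ [c]))"
  using parity_cases[of ys] assms
  by (auto simp: parity_rule_def settled_tok_def parity_snoc)

lemma parity_rule_EOQ: "parity_rule EOQ (settled_tok (parity ys)) = answer_tok (parity ys)"
  using parity_cases[of ys] by (auto simp: parity_rule_def settled_tok_def EOQ_def)

lemma parity_rule_unsettled_prev:
  "p \<notin> {settled_tok 0, settled_tok 1} \<Longrightarrow> parity_rule c p = c"
  by (simp add: parity_rule_def)

lemma parity_rule_settled:
  "parity_rule (settled_tok (parity ys)) p = settled_tok (parity ys)"
  using parity_cases[of ys] by (auto simp: parity_rule_def settled_tok_def EOQ_def)

lemma last_settled_prefix: "last (settled_tok 0 # settled_prefix ys) = settled_tok (parity ys)"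
  by (cases "ys = []") (simp_all add: settled_prefix_def last_map parity_def)

lemma settled_prefix_snoc:
  "settled_prefix (ys @ [c]) = settled_prefix ys @ [settled_tok (parity (ys @ [c]))]"
  by (simp add: settled_prefix_def)

lemma parity_step_frontier:
  assumes "set (c # rest) \<inter> {settled_tok 0, settled_tok 1} = {}"
  shows "parity_step (settled_prefix ys @ c # rest)
       = settled_prefix ys @ parity_rule c (settled_tok (parity ys)) # rest"
proof -
  have "parity_step (settled_prefix ys) = settled_prefix ys"
    by (rule map_prev_ident) (auto simp: settled_prefix_def parity_rule_settled)
  moreover have "map_prev parity_rule c rest = rest"
    by (rule map_prev_ident) (use assms in \<open>auto intro: parity_rule_unsettled_prev\<close>)
  ultimately show ?thesis
    unfolding map_prev_append last_settled_prefix by simp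
qed

lemma parity_step_bit:
  assumes "z \<in> {0, 1}" and "set zs \<subseteq> {0, 1}"
  shows "parity_step (parity_config ys (z # zs) n') = parity_config (ys @ [z]) zs n'"
proof -
  have "set (z # zs @ EOQ # replicate n' EOS) \<inter> {settled_tok 0, settled_tok 1} = {}"
    using assms by (auto simp: settled_tok_def EOQ_def EOS_def)
  then show ?thesis
    using assms(1)
    by (simp add: parity_config_def parity_step_frontier parity_rule_bit settled_prefix_snoc)
qed

lemma parity_step_EOQ:
  "parity_step (parity_config xs [] n')
     = settled_prefix xs @ answer_tok (parity xs) # replicate n' EOS"
proof -
  have "set (EOQ # replicate n' EOS) \<inter> {settled_tok 0, settled_tok 1} = {}"
    by (auto simp: settled_tok_def EOQ_def EOS_def)
  then show ?thesis
    by (simp add: parity_config_def parity_step_frontier parity_rule_EOQ)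
qed

lemma funpow_parity_step:
  "set zs \<subseteq> {0, 1} \<Longrightarrow>
    (parity_step ^^ length zs) (parity_config ys zs n') = parity_config (ys @ zs) [] n'"
proof (induction zs arbitrary: ys)
  case Nil
  then show ?case by simp
next
  case (Cons z zs)
  then show ?case
    by (simp add: funpow_Suc_right parity_step_bit del: funpow.simps)
qed

definition parity_step_prog :: rasp_prog where
  "parity_step_prog = prev_rule_prog parity_rule (settled_tok 0)"

lemma rasp_l_parity_step_prog: "rasp_l parity_step_prog"
  by (simp add: parity_step_prog_def rasp_l_prev_rule_prog)

text \<open>The pre-processing is one extra step, so the step program runs n + 1 times.\<close>

lemma n_rasp_run_parity:
  assumes "set xs \<subseteq> {0, 1}"
  shows "n_rasp_run parity_step_prog parity_step_prog (map_prog decode) (\<lambda>m. m) (length xs)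
           (xs @ EOQ # replicate n' EOS)
       = map decode (settled_prefix xs) @ parity xs # replicate n' EOS"
proof -
  have run_step: "run parity_step_prog = parity_step"
    by (rule ext) (simp add: parity_step_prog_def run_prev_rule_prog)
  have "(parity_step ^^ length xs) (xs @ EOQ # replicate n' EOS) = parity_config xs [] n'"
    using funpow_parity_step[OF assms, of "[]" n']
    by (simp add: parity_config_def settled_prefix_def)
  then show ?thesis
    using parity_cases[of xs]
    by (auto simp: n_rasp_run_def run_step run_map_prog funpow_swap1[symmetric] parity_step_EOQ
        decode_def answer_tok_def EOS_def)
qed

theorem proposition1:
  "\<exists>pre step post. rasp_l pre \<and> rasp_l step \<and> rasp_l post \<and>
     (\<forall>n n' (xs :: int list). n \<ge> 1 \<longrightarrow> length xs = n \<longrightarrow> set xs \<subseteq> {0, 1} \<longrightarrow>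
        (let inp = xs @ [EOQ] @ replicate n' EOS;
             out = n_rasp_run pre step post (\<lambda>m. m) n inp
         in length out = n + 1 + n' \<and>
            out ! n = (sum_list xs) mod 2 \<and>
            (\<forall>j < n'. out ! (n + 1 + j) = EOS)))"
proof (rule exI[of _ parity_step_prog], rule exI[of _ parity_step_prog],
    rule exI[of _ "map_prog decode"])
qed (auto simp: rasp_l_parity_step_prog rasp_l_map_prog n_rasp_run_parity
       settled_prefix_def nth_append parity_def)

end
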